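(* Let $f\in\operatorname{Lip}_1([0,1],\mathbb{R})$, $s<t\in[0,1]$, $\tau,\varepsilon\in(0,1)$, and suppose $f(t)-f(s)=t-s$. Then there exists $\delta>0$ such that for every $g\in\operatorname{Lip}_1([0,1],\mathbb{R})$ with $\|g-f\|_\infty\leq\delta$, the set $C=\{r\in[s,t]\colon g'(r)\text{ exists and } g'(r)\geq\tau\}$ has Lebesgue measure at least $(1-\varepsilon)(t-s)$.
   Context: $\operatorname{Lip}_1([0,1],\mathbb{R})$ is the set of functions $[0,1]\to\mathbb{R}$ with Lipschitz constant at most $1$, with the supremum metric. *)

theory Defs
  imports "HOL-Analysis.Analysis"
begin

text \<open>Lip_1([0,1],R): functions with Lipschitz constant at most 1 on [0,1].
  Functions are modelled as real \<Rightarrow> real; only values on [0,1] matter.\<close>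
definition Lip1 :: "(real \<Rightarrow> real) set" where
  "Lip1 = {f. 1-lipschitz_on {0..1} f}"

definition sup_dist01 :: "(real \<Rightarrow> real) \<Rightarrow> (real \<Rightarrow> real) \<Rightarrow> real" where
  "sup_dist01 g f = (SUP x\<in>{0..1}. \<bar>g x - f x\<bar>)"

end

(*
  Put q = 1 - tau and h = id - g, extended by constants outside [0, 1].  For g in Lip_1 the
  function h is monotone and 2-Lipschitz, and g'(r) >= tau exactly where h'(r) <= q.  Since f
  increases by t - s on [s, t], a g that is delta-close to f has h(t) - h(s) <= 2 delta.

  By Lebesgue's theorem h is differentiable almost everywhere, which follows from the Vitali
  covering theorem: if the slopes of h over small balls around x accumulate both below
  a and above b > a, then comparing Lebesgue measure with the Lebesgue-Stieltjes measure of h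
  on two nested Vitali covers shrinks the outer measure of such points by the factor a / b, so
  it is zero.  A Vitali cover of the points of (s, t) where h' > q by balls on which h has
  slope at least q shows that they have measure at most (h(t) - h(s)) / q <= 2 delta / q.
  With delta = epsilon q (t - s) / 2, the set C has measure at least (1 - epsilon) (t - s).
*)
theory Submission
  imports Defs
begin

section \<open>Slopes over shrinking balls\<close>

text \<open>Closed balls are encoded as pairs (centre, radius); the slopes of a function along this
  filter take the place of the Dini derivatives in Lebesgue's theorem.\<close>
definition shrinking_cballs :: "real \<Rightarrow> (real \<times> real) filter" where
  "shrinking_cballs x = (INF d\<in>{0<..}. principal {(c, r). 0 < r \<and> r < d \<and> x \<in> cball c r})"

definition cball_slope :: "(real \<Rightarrow> real) \<Rightarrow> real \<times> real \<Rightarrow> real" where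
  "cball_slope h = (\<lambda>(c, r). (h (c + r) - h (c - r)) / (2 * r))"

lemma eventually_shrinking_cballs:
  "eventually P (shrinking_cballs x) \<longleftrightarrow>
     (\<exists>d>0. \<forall>c r. 0 < r \<longrightarrow> r < d \<longrightarrow> x \<in> cball c r \<longrightarrow> P (c, r))"
  unfolding shrinking_cballs_def
proof (subst eventually_INF_base)
  fix a b :: real assume "a \<in> {0<..}" "b \<in> {0<..}"
  then show "\<exists>d\<in>{0<..}. principal {(c, r). 0 < r \<and> r < d \<and> x \<in> cball c r}
      \<le> inf (principal {(c, r). 0 < r \<and> r < a \<and> x \<in> cball c r})
             (principal {(c, r). 0 < r \<and> r < b \<and> x \<in> cball c r})"
    by (intro bexI[of _ "min a b"]) auto
qed (auto simp: eventually_principal)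

lemma frequently_shrinking_cballs:
  "frequently P (shrinking_cballs x) \<longleftrightarrow>
     (\<forall>d>0. \<exists>c r. 0 < r \<and> r < d \<and> x \<in> cball c r \<and> P (c, r))"
  unfolding frequently_def eventually_shrinking_cballs by blast

lemma shrinking_cballs_neq_bot [simp]: "shrinking_cballs x \<noteq> bot"
proof -
  have "\<exists>c r. 0 < r \<and> r < d \<and> x \<in> cball c r" if "d > 0" for d
    using that by (intro exI[of _ x] exI[of _ "d/2"]) auto
  then show ?thesis
    by (simp add: trivial_limit_def eventually_shrinking_cballs)
qed

lemma eventually_shrinking_cballs_pos: "\<forall>\<^sub>F i in shrinking_cballs x. 0 < snd i"
  unfolding eventually_shrinking_cballs by (auto intro: exI[of _ 1])

lemma eventually_cball_subset_open:
  assumes "open U" "x \<in> U"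
  shows "eventually (\<lambda>(c, r). cball c r \<subseteq> U) (shrinking_cballs x)"
proof -
  obtain e where "e > 0" "ball x e \<subseteq> U"
    using assms openE by blast
  then show ?thesis
    unfolding eventually_shrinking_cballs
    by (intro exI[of _ "e/2"]) (auto simp: dist_real_def subset_iff)
qed

lemma cball_slope_difference_quotient:
  assumes "k \<noteq> 0"
  shows "cball_slope h (x + k/2, \<bar>k\<bar>/2) = (h (x + k) - h x) / k"
proof (cases "k > 0")
  case True
  then have "x + k/2 + \<bar>k\<bar>/2 = x + k" "x + k/2 - \<bar>k\<bar>/2 = x" "2 * (\<bar>k\<bar>/2) = k"
    by auto
  then show ?thesis
    by (simp add: cball_slope_def add.commute)
next
  case False
  with assms have "x + k/2 + \<bar>k\<bar>/2 = x" "x + k/2 - \<bar>k\<bar>/2 = x + k" "2 * (\<bar>k\<bar>/2) = - k"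
    by auto
  then show ?thesis
    by (simp add: cball_slope_def add.commute diff_divide_distrib)
qed

lemma filterlim_difference_quotient_shrinking_cballs:
  "filterlim (\<lambda>k. (x + k/2, \<bar>k\<bar>/2)) (shrinking_cballs x) (at 0)"
  unfolding filterlim_def le_filter_def eventually_filtermap eventually_shrinking_cballs
proof safe
  fix P d assume "0 < (d::real)" "\<forall>c r. 0 < r \<longrightarrow> r < d \<longrightarrow> x \<in> cball c r \<longrightarrow> P (c, r)"
  then show "\<forall>\<^sub>F k in at 0. P (x + k/2, \<bar>k\<bar>/2)"
    unfolding eventually_at by (intro exI[of _ d]) (auto simp: dist_real_def)
qed

lemma has_real_derivative_if_cball_slope_tendsto:
  assumes "(cball_slope h \<longlongrightarrow> D) (shrinking_cballs x)"
  shows "(h has_real_derivative D) (at x)"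
proof -
  have "((\<lambda>k. cball_slope h (x + k/2, \<bar>k\<bar>/2)) \<longlongrightarrow> D) (at 0)"
    using filterlim_compose[OF assms filterlim_difference_quotient_shrinking_cballs] .
  then have "((\<lambda>k. (h (x + k) - h x) / k) \<longlongrightarrow> D) (at 0)"
    by (rule tendsto_cong[THEN iffD1, rotated])
       (simp add: eventually_at_filter cball_slope_difference_quotient)
  then show ?thesis
    by (simp add: DERIV_def)
qed

lemma frequently_cball_slope_gt_if_derivative_gt:
  assumes "(h has_real_derivative D) (at x)" "q < D"
  shows "\<exists>\<^sub>F i in shrinking_cballs x. q < cball_slope h i"
proof -
  have "\<forall>\<^sub>F k in at 0. q < (h (x + k) - h x) / k"
    using order_tendstoD(1)[OF assms(1)[unfolded DERIV_def] assms(2)] .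
  moreover have "\<forall>\<^sub>F k in at (0::real). k \<noteq> 0"
    by (simp add: eventually_at_filter)
  ultimately have "\<forall>\<^sub>F k in at 0. q < cball_slope h (x + k/2, \<bar>k\<bar>/2)"
    by eventually_elim (simp add: cball_slope_difference_quotient)
  show ?thesis
  proof (rule ccontr)
    assume "\<not> ?thesis"
    then have "\<forall>\<^sub>F i in shrinking_cballs x. \<not> q < cball_slope h i"
      by (simp add: not_frequently)
    from filterlim_iff[THEN iffD1, OF filterlim_difference_quotient_shrinking_cballs,
        rule_format, OF this]
    have "\<forall>\<^sub>F k in at 0. \<not> q < cball_slope h (x + k/2, \<bar>k\<bar>/2)" .
    with \<open>\<forall>\<^sub>F k in at 0. q < cball_slope h (x + k/2, \<bar>k\<bar>/2)\<close>
    have "\<forall>\<^sub>F k in at (0::real). False"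
      by eventually_elim simp
    then show False
      by simp
  qed
qed

lemma cball_slope_nonneg:
  assumes "mono h" "0 < snd i"
  shows "0 \<le> cball_slope h i"
  using assms by (cases i) (simp add: cball_slope_def mono_def)

lemma cball_slope_le_lipschitz:
  assumes "L-lipschitz_on UNIV h" "0 < snd i"
  shows "cball_slope h i \<le> L"
proof (cases i)
  case (Pair c r)
  have "h (c + r) - h (c - r) \<le> L * (2 * r)"
    using lipschitz_onD[OF assms(1), of "c + r" "c - r"] assms(2)
    by (simp add: Pair dist_real_def)
  then show ?thesis
    using assms(2) by (simp add: Pair cball_slope_def divide_le_eq)
qed

definition slope_gap :: "(real \<Rightarrow> real) \<Rightarrow> real \<Rightarrow> real \<Rightarrow> real \<Rightarrow> bool" where
  "slope_gap h p q x \<longleftrightarrow> (\<exists>\<^sub>F i in shrinking_cballs x. cball_slope h i \<le> p) \<and>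
                        (\<exists>\<^sub>F i in shrinking_cballs x. q \<le> cball_slope h i)"

text \<open>The candidate derivative is the supremum of the eventual lower bounds of the slopes;
  a gap between it and the slopes above it would be witnessed by rationals.\<close>
lemma cball_slope_convergent_if_no_gap:
  assumes mono: "mono h" and lip: "L-lipschitz_on UNIV h"
    and no_gap: "\<And>p q. p \<in> \<rat> \<Longrightarrow> q \<in> \<rat> \<Longrightarrow> 0 \<le> p \<Longrightarrow> p < q \<Longrightarrow> \<not> slope_gap h p q x"
  shows "\<exists>D. (cball_slope h \<longlongrightarrow> D) (shrinking_cballs x)"
proof
  let ?F = "shrinking_cballs x"
  define A where "A = {p. \<forall>\<^sub>F i in ?F. p < cball_slope h i}"
  have neg_in_A: "p \<in> A" if "p < 0" for p
    using eventually_shrinking_cballs_pos[of x] unfolding A_def mem_Collect_eq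
    by (rule eventually_mono) (use that cball_slope_nonneg[OF mono] in fastforce)
  have "p < L" if "p \<in> A" for p
  proof -
    have "\<forall>\<^sub>F i in ?F. p < cball_slope h i \<and> cball_slope h i \<le> L"
      using that eventually_shrinking_cballs_pos[of x] unfolding A_def mem_Collect_eq
      by eventually_elim (use cball_slope_le_lipschitz[OF lip] in blast)
    then show ?thesis
      using eventually_happens'[OF shrinking_cballs_neq_bot] by fastforce
  qed
  then have bdd: "bdd_above A"
    by (meson bdd_aboveI less_imp_le)
  have "0 \<le> Sup A"
  proof (rule ccontr)
    assume "\<not> 0 \<le> Sup A"
    then have "Sup A / 2 \<in> A"
      by (intro neg_in_A) simp
    then show False
      using cSup_upper[OF _ bdd, of "Sup A / 2"] \<open>\<not> 0 \<le> Sup A\<close> by linarith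
  qed
  show "(cball_slope h \<longlongrightarrow> Sup A) ?F"
  proof (rule order_tendstoI)
    fix y assume "y < Sup A"
    moreover have "A \<noteq> {}"
      using neg_in_A[of "-1"] by auto
    ultimately obtain p where "p \<in> A" "y < p"
      by (rule less_cSupE)
    then show "\<forall>\<^sub>F i in ?F. y < cball_slope h i"
      unfolding A_def by (auto elim: eventually_mono)
  next
    fix y assume "Sup A < y"
    then obtain p where p: "p \<in> \<rat>" "Sup A < p" "p < y"
      using Rats_dense_in_real by blast
    then obtain q where q: "q \<in> \<rat>" "p < q" "q < y"
      using Rats_dense_in_real by blast
    note pq = p(1) q(1) p(2) q(2,3)
    then have "p \<notin> A"
      using cSup_upper[OF _ bdd, of p] by linarith
    then have "\<exists>\<^sub>F i in ?F. cball_slope h i \<le> p"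
      unfolding A_def frequently_def not_le by simp
    then have "\<not> (\<exists>\<^sub>F i in ?F. q \<le> cball_slope h i)"
      using no_gap[OF pq(1,2) _ pq(4)] pq(3) \<open>0 \<le> Sup A\<close> by (auto simp: slope_gap_def)
    then show "\<forall>\<^sub>F i in ?F. cball_slope h i < y"
      unfolding not_frequently by (rule eventually_mono) (use pq(5) in auto)
  qed
qed

section \<open>Vitali covers and the interval measure\<close>

lemma Vitali_covering_cballs_in_open:
  fixes S U :: "real set"
  assumes "open U" "S \<subseteq> U" "\<And>x. x \<in> S \<Longrightarrow> \<exists>\<^sub>F i in shrinking_cballs x. P i"
  obtains C where "countable C" "\<And>c r. (c, r) \<in> C \<Longrightarrow> 0 < r \<and> cball c r \<subseteq> U \<and> P (c, r)"
    "disjoint_family_on (\<lambda>(c, r). cball c r) C"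
    "negligible (S - (\<Union>(c, r)\<in>C. cball c r))"
proof -
  let ?K = "{(c, r). 0 < r \<and> cball c r \<subseteq> U \<and> P (c, r)}"
  have cover: "\<exists>i. i \<in> ?K \<and> x \<in> cball (fst i) (snd i) \<and> snd i < d"
    if "x \<in> S" "0 < d" for x d
  proof -
    have "\<exists>\<^sub>F i in shrinking_cballs x. (\<lambda>(c, r). cball c r \<subseteq> U) i \<and> P i"
      using frequently_eventually_conj[OF assms(3)[OF that(1)]
          eventually_cball_subset_open[OF assms(1) subsetD[OF assms(2) that(1)]]] .
    then obtain c r where "0 < r" "r < d" "x \<in> cball c r" "cball c r \<subseteq> U" "P (c, r)"
      using \<open>0 < d\<close> unfolding frequently_shrinking_cballs by fastforce
    then show ?thesis
      by (intro exI[of _ "(c, r)"]) auto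
  qed
  have "0 < snd i" if "i \<in> ?K" for i
    using that by auto
  then obtain C where C: "countable C" "C \<subseteq> ?K"
    "pairwise (\<lambda>i j. disjnt (cball (fst i) (snd i)) (cball (fst j) (snd j))) C"
    "negligible (S - (\<Union>i\<in>C. cball (fst i) (snd i)))"
    using cover by (rule Vitali_covering_theorem_cballs)
  show ?thesis
  proof (rule that)
    show "\<And>c r. (c, r) \<in> C \<Longrightarrow> 0 < r \<and> cball c r \<subseteq> U \<and> P (c, r)"
      using C(2) by blast
    show "disjoint_family_on (\<lambda>(c, r). cball c r) C"
      using C(3) unfolding disjoint_family_on_def pairwise_def disjnt_def split_beta by blast
    show "negligible (S - (\<Union>(c, r)\<in>C. cball c r))"
      using C(4) by (simp add: split_beta)
  qed (rule C(1))
qed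

lemma emeasure_lebesgue_cball_real:
  "0 \<le> r \<Longrightarrow> emeasure lebesgue (cball (c::real) r) = ennreal (2 * r)"
  by (simp add: cball_eq_atLeastAtMost emeasure_completion)

lemma emeasure_interval_measure_cball_slope:
  assumes "mono h" "continuous_on UNIV h" "0 < r"
  shows "emeasure (interval_measure h) (cball c r) =
    ennreal (cball_slope h (c, r)) * emeasure lebesgue (cball c r)"
proof -
  have "emeasure (interval_measure h) (cball c r) = ennreal (h (c + r) - h (c - r))"
    unfolding cball_eq_atLeastAtMost
    by (rule emeasure_interval_measure_Icc) (use assms in \<open>auto simp: mono_def\<close>)
  also have "h (c + r) - h (c - r) = cball_slope h (c, r) * (2 * r)"
    using assms(3) by (simp add: cball_slope_def)
  also have "ennreal (cball_slope h (c, r) * (2 * r)) =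
      ennreal (cball_slope h (c, r)) * ennreal (2 * r)"
    using assms(3) by (simp add: ennreal_mult'')
  finally show ?thesis
    by (subst emeasure_lebesgue_cball_real) (use assms(3) in auto)
qed

lemma emeasure_UN_countable_scaled_le:
  fixes X :: "'i \<Rightarrow> 'a set" and a b :: ennreal
  assumes "countable I" "disjoint_family_on X I"
    and "\<And>i. i \<in> I \<Longrightarrow> X i \<in> sets M" "\<And>i. i \<in> I \<Longrightarrow> X i \<in> sets N"
    and "\<And>i. i \<in> I \<Longrightarrow> a * emeasure M (X i) \<le> b * emeasure N (X i)"
  shows "a * emeasure M (\<Union>(X ` I)) \<le> b * emeasure N (\<Union>(X ` I))"
proof -
  have "a * emeasure M (\<Union>(X ` I)) = (\<integral>\<^sup>+i. a * emeasure M (X i) \<partial>count_space I)"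
    by (simp add: emeasure_UN_countable assms nn_integral_cmult)
  also have "\<dots> \<le> (\<integral>\<^sup>+i. b * emeasure N (X i) \<partial>count_space I)"
    by (rule nn_integral_mono) (simp add: assms)
  also have "\<dots> = b * emeasure N (\<Union>(X ` I))"
    by (simp add: emeasure_UN_countable assms nn_integral_cmult)
  finally show ?thesis .
qed

lemma interval_measure_UN_cballs_le:
  assumes "mono h" "continuous_on UNIV h" "countable C" "disjoint_family_on (\<lambda>(c, r). cball c r) C"
    and "\<And>c r. (c, r) \<in> C \<Longrightarrow> 0 < r \<and> cball_slope h (c, r) \<le> p"
  shows "emeasure (interval_measure h) (\<Union>(c, r)\<in>C. cball c r)
    \<le> ennreal p * emeasure lebesgue (\<Union>(c, r)\<in>C. cball c r)"
proof -
  have "1 * emeasure (interval_measure h) (\<Union>(c, r)\<in>C. cball c r)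
    \<le> ennreal p * emeasure lebesgue (\<Union>(c, r)\<in>C. cball c r)"
  proof (rule emeasure_UN_countable_scaled_le[OF assms(3,4)])
    fix i assume "i \<in> C"
    moreover obtain c r where "i = (c, r)"
      by fastforce
    ultimately show "1 * emeasure (interval_measure h) ((\<lambda>(c, r). cball c r) i)
      \<le> ennreal p * emeasure lebesgue ((\<lambda>(c, r). cball c r) i)"
      using assms(5)[of c r]
      by (auto simp: emeasure_interval_measure_cball_slope[OF assms(1,2)]
          intro!: mult_right_mono ennreal_leI)
  qed (auto simp: sets_completionI_sets)
  then show ?thesis
    by simp
qed

lemma interval_measure_UN_cballs_ge:
  assumes "mono h" "continuous_on UNIV h" "countable C" "disjoint_family_on (\<lambda>(c, r). cball c r) C"
    and "\<And>c r. (c, r) \<in> C \<Longrightarrow> 0 < r \<and> q \<le> cball_slope h (c, r)"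
  shows "ennreal q * emeasure lebesgue (\<Union>(c, r)\<in>C. cball c r)
    \<le> emeasure (interval_measure h) (\<Union>(c, r)\<in>C. cball c r)"
proof -
  have "ennreal q * emeasure lebesgue (\<Union>(c, r)\<in>C. cball c r)
    \<le> 1 * emeasure (interval_measure h) (\<Union>(c, r)\<in>C. cball c r)"
  proof (rule emeasure_UN_countable_scaled_le[OF assms(3,4)])
    fix i assume "i \<in> C"
    moreover obtain c r where "i = (c, r)"
      by fastforce
    ultimately show "ennreal q * emeasure lebesgue ((\<lambda>(c, r). cball c r) i)
      \<le> 1 * emeasure (interval_measure h) ((\<lambda>(c, r). cball c r) i)"
      using assms(5)[of c r]
      by (auto simp: emeasure_interval_measure_cball_slope[OF assms(1,2)]
          intro!: mult_right_mono ennreal_leI)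
  qed (auto simp: sets_completionI_sets)
  then show ?thesis
    by simp
qed

lemma countable_imp_negligible:
  fixes S :: "'a::euclidean_space set"
  assumes "countable S"
  shows "negligible S"
proof -
  have "negligible (\<Union>x\<in>S. {x})"
    using assms by (intro negligible_countable_Union) auto
  then show ?thesis
    by simp
qed

lemma lmeasurable_outer_open:
  assumes "T \<in> lmeasurable" "0 < e"
  obtains U where "open U" "T \<subseteq> U" "U \<in> lmeasurable" "measure lebesgue U \<le> measure lebesgue T + e"
proof -
  obtain U where U: "open U" "T \<subseteq> U" "U - T \<in> lmeasurable" "emeasure lebesgue (U - T) < ennreal e"
    using sets_lebesgue_outer_open[of T e] assms fmeasurableD by blast
  have "U = T \<union> (U - T)"
    using U(2) by blast
  then have "U \<in> lmeasurable"
    using assms(1) U(3) by (metis fmeasurable.Un)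
  moreover have "measure lebesgue (U - T) \<le> e"
    using U(3,4) assms(2) by (simp add: emeasure_eq_measure2 ennreal_less_iff)
  then have "measure lebesgue U \<le> measure lebesgue T + e"
    using measure_Un_le[of T lebesgue "U - T"] assms(1) U(3) \<open>U = T \<union> (U - T)\<close>
    by (simp add: fmeasurable_def)
  ultimately show ?thesis
    using U that by blast
qed

lemma UN_cballs_borel:
  "countable C \<Longrightarrow> (\<Union>(c, r)\<in>C. cball c r) \<in> sets (borel :: real measure)"
  by (intro sets.countable_UN') (auto simp: split_beta)

text \<open>The open set \<open>V\<close> of the interiors allows a second Vitali cover to be nested inside \<open>W\<close>.\<close>
lemma cover_by_cballs_slope_le:
  fixes S U :: "real set"
  assumes "mono h" "continuous_on UNIV h" "open U" "S \<subseteq> U"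
    and "\<And>x. x \<in> S \<Longrightarrow> \<exists>\<^sub>F i in shrinking_cballs x. cball_slope h i \<le> p"
  obtains W V where "W \<in> sets borel" "W \<subseteq> U" "open V" "V \<subseteq> W" "negligible (S - V)"
    "emeasure (interval_measure h) W \<le> ennreal p * emeasure lebesgue W"
proof -
  obtain C where C: "countable C"
    "\<And>c r. (c, r) \<in> C \<Longrightarrow> 0 < r \<and> cball c r \<subseteq> U \<and> cball_slope h (c, r) \<le> p"
    "disjoint_family_on (\<lambda>(c, r). cball c r) C" "negligible (S - (\<Union>(c, r)\<in>C. cball c r))"
    using Vitali_covering_cballs_in_open[OF assms(3-5)] by blast
  define W where "W = (\<Union>(c, r)\<in>C. cball c r)"
  define V where "V = (\<Union>(c, r)\<in>C. ball c r)"
  have "cball c r - ball c r \<subseteq> {c - r, c + r}" for c r :: real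
    by (auto simp: dist_real_def)
  then have "W - V \<subseteq> (\<Union>(c, r)\<in>C. {c - r, c + r})"
    unfolding W_def V_def by fast
  moreover have "countable (\<Union>(c, r)\<in>C. {c - r, c + r})"
    using C(1) by (auto simp: split_beta)
  ultimately have "negligible (W - V)"
    by (meson countable_imp_negligible countable_subset)
  then have "negligible (S - V)"
    using C(4) unfolding W_def by (rule negligible_subset[OF negligible_Un]) auto
  moreover have "emeasure (interval_measure h) W \<le> ennreal p * emeasure lebesgue W"
    unfolding W_def using assms(1,2) C(1,3)
    by (rule interval_measure_UN_cballs_le) (use C(2) in blast)
  moreover have "W \<subseteq> U" "V \<subseteq> W" "open V"
    using C(2) by (auto simp: W_def V_def)
  ultimately show ?thesis
    using that UN_cballs_borel[OF C(1)] unfolding W_def by blast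
qed

lemma cover_by_cballs_slope_ge:
  fixes S U :: "real set"
  assumes "mono h" "continuous_on UNIV h" "open U" "S \<subseteq> U"
    and "\<And>x. x \<in> S \<Longrightarrow> \<exists>\<^sub>F i in shrinking_cballs x. q \<le> cball_slope h i"
  obtains W where "W \<in> sets borel" "W \<subseteq> U" "negligible (S - W)"
    "ennreal q * emeasure lebesgue W \<le> emeasure (interval_measure h) W"
proof -
  obtain C where C: "countable C"
    "\<And>c r. (c, r) \<in> C \<Longrightarrow> 0 < r \<and> cball c r \<subseteq> U \<and> q \<le> cball_slope h (c, r)"
    "disjoint_family_on (\<lambda>(c, r). cball c r) C" "negligible (S - (\<Union>(c, r)\<in>C. cball c r))"
    using Vitali_covering_cballs_in_open[OF assms(3-5)] by blast
  have "ennreal q * emeasure lebesgue (\<Union>(c, r)\<in>C. cball c r)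
      \<le> emeasure (interval_measure h) (\<Union>(c, r)\<in>C. cball c r)"
    using assms(1,2) C(1,3) by (rule interval_measure_UN_cballs_ge) (use C(2) in blast)
  moreover have "(\<Union>(c, r)\<in>C. cball c r) \<subseteq> U"
    using C(2) by auto
  ultimately show ?thesis
    using that UN_cballs_borel[OF C(1)] C(4) by blast
qed

section \<open>Lebesgue's differentiation theorem for monotone Lipschitz functions\<close>

lemma eq_0_if_contracting:
  fixes m p q :: real
  assumes "0 \<le> m" "0 \<le> p" "p < q" and contract: "\<And>e. 0 < e \<Longrightarrow> q * m \<le> p * (m + e)"
  shows "m = 0"
proof -
  have "q * m \<le> p * m"
  proof (rule field_le_epsilon)
    fix e :: real assume "0 < e"
    then have "q * m \<le> p * (m + e / (p + 1))"
      using \<open>0 \<le> p\<close> by (intro contract) auto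
    also have "\<dots> \<le> p * m + e"
      using \<open>0 < e\<close> \<open>0 \<le> p\<close> by (simp add: field_simps)
    finally show "q * m \<le> p * m + e" .
  qed
  then have "(q - p) * m \<le> 0"
    by (simp add: algebra_simps)
  then show "m = 0"
    using assms(1,3) by (simp add: mult_le_0_iff)
qed

lemma negligible_if_covers_contract:
  fixes S :: "'a::euclidean_space set"
  assumes "S \<subseteq> T\<^sub>0" "T\<^sub>0 \<in> lmeasurable" "0 \<le> p" "p < q"
    and contract: "\<And>T e. S \<subseteq> T \<Longrightarrow> T \<in> lmeasurable \<Longrightarrow> 0 < e \<Longrightarrow>
      \<exists>T'. S \<subseteq> T' \<and> T' \<in> lmeasurable \<and> q * measure lebesgue T' \<le> p * (measure lebesgue T + e)"
  shows "negligible S"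
proof -
  define M where "M = measure lebesgue ` {T. S \<subseteq> T \<and> T \<in> lmeasurable}"
  have M_nonempty: "M \<noteq> {}"
    using assms(1,2) unfolding M_def by blast
  have M_bdd: "bdd_below M"
    unfolding M_def by (rule bdd_belowI[of _ 0]) auto
  have "0 \<le> Inf M"
    using M_nonempty by (rule cInf_greatest) (auto simp: M_def)
  have "q * Inf M \<le> p * (Inf M + e)" if "0 < e" for e
  proof -
    obtain T where T: "S \<subseteq> T" "T \<in> lmeasurable" "measure lebesgue T < Inf M + e / 2"
      using cInf_lessD[OF M_nonempty, of "Inf M + e / 2"] \<open>0 < e\<close> unfolding M_def by auto
    obtain T' where T': "S \<subseteq> T'" "T' \<in> lmeasurable"
      "q * measure lebesgue T' \<le> p * (measure lebesgue T + e / 2)"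
      using contract[OF T(1,2)] \<open>0 < e\<close> by (meson half_gt_zero)
    have "Inf M \<le> measure lebesgue T'"
      using T' M_bdd by (intro cInf_lower) (auto simp: M_def)
    then have "q * Inf M \<le> q * measure lebesgue T'"
      using \<open>0 \<le> p\<close> \<open>p < q\<close> by (intro mult_left_mono) auto
    also have "\<dots> \<le> p * (Inf M + e)"
      using T'(3) T(3) \<open>0 \<le> p\<close> mult_left_mono[of "measure lebesgue T + e / 2" "Inf M + e" p]
      by linarith
    finally show ?thesis .
  qed
  with \<open>0 \<le> Inf M\<close> \<open>0 \<le> p\<close> \<open>p < q\<close> have "Inf M = 0"
    by (rule eq_0_if_contracting)
  show "negligible S"
    unfolding negligible_outer
  proof (intro allI impI)
    fix e :: real assume "0 < e"
    then obtain z where "z \<in> M" "z < e"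
      using cInf_lessD[OF M_nonempty, of e] \<open>Inf M = 0\<close> by auto
    then show "\<exists>T. S \<subseteq> T \<and> T \<in> lmeasurable \<and> measure lebesgue T < e"
      unfolding M_def by auto
  qed
qed

text \<open>Balls of slope at most \<open>p\<close> give the interval measure of \<open>h\<close> a small upper bound, and
  balls of slope at least \<open>q\<close> inside them a large lower bound.\<close>
lemma slope_gap_cover_in_open:
  fixes S U :: "real set"
  assumes mono: "mono h" and cont: "continuous_on UNIV h" and "0 \<le> p"
    and gap: "\<And>x. x \<in> S \<Longrightarrow> slope_gap h p q x" and U: "open U" "S \<subseteq> U"
  obtains W where "W \<in> sets borel" "W \<subseteq> U" "negligible (S - W)"
    "ennreal q * emeasure lebesgue W \<le> ennreal p * emeasure lebesgue U"
proof -
  obtain W1 V1 where W1: "W1 \<in> sets borel" "W1 \<subseteq> U" "open V1" "V1 \<subseteq> W1" "negligible (S - V1)"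
    "emeasure (interval_measure h) W1 \<le> ennreal p * emeasure lebesgue W1"
    using cover_by_cballs_slope_le[OF mono cont U, of p] gap unfolding slope_gap_def by blast
  obtain W2 where W2: "W2 \<in> sets borel" "W2 \<subseteq> V1" "negligible (S \<inter> V1 - W2)"
    "ennreal q * emeasure lebesgue W2 \<le> emeasure (interval_measure h) W2"
    using cover_by_cballs_slope_ge[OF mono cont \<open>open V1\<close>, of "S \<inter> V1" q] gap
    unfolding slope_gap_def by blast
  have "ennreal q * emeasure lebesgue W2 \<le> emeasure (interval_measure h) W1"
    using W2(4) emeasure_mono[of W2 W1 "interval_measure h"] W1(1,4) W2(2) by fastforce
  also have "\<dots> \<le> ennreal p * emeasure lebesgue W1"
    by (rule W1(6))
  also have "\<dots> \<le> ennreal p * emeasure lebesgue U"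
    using W1(2) U(1) by (intro mult_left_mono emeasure_mono) (auto simp: sets_completionI_sets)
  finally have "ennreal q * emeasure lebesgue W2 \<le> ennreal p * emeasure lebesgue U" .
  moreover have "negligible (S - W2)"
    using negligible_Un[OF W2(3) W1(5)] by (rule negligible_subset) auto
  moreover have "W2 \<subseteq> U"
    using W1(2,4) W2(2) by blast
  ultimately show ?thesis
    using that W2(1) by blast
qed

lemma negligible_slope_gap:
  assumes mono: "mono h" and cont: "continuous_on UNIV h" and "0 \<le> p" "p < q"
  shows "negligible {x. slope_gap h p q x}"
proof (subst negligible_on_intervals, intro allI)
  fix a b :: real
  let ?S = "{x. slope_gap h p q x} \<inter> cbox a b"
  show "negligible ?S"
  proof (rule negligible_if_covers_contract[OF _ lmeasurable_cbox \<open>0 \<le> p\<close> \<open>p < q\<close>])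
    fix T e assume T: "?S \<subseteq> T" "T \<in> lmeasurable" and "0 < (e::real)"
    obtain U where U: "open U" "T \<subseteq> U" "U \<in> lmeasurable"
      "measure lebesgue U \<le> measure lebesgue T + e"
      using lmeasurable_outer_open[OF T(2) \<open>0 < e\<close>] .
    obtain W where W: "W \<in> sets borel" "W \<subseteq> U" "negligible (?S - W)"
      "ennreal q * emeasure lebesgue W \<le> ennreal p * emeasure lebesgue U"
      using slope_gap_cover_in_open[OF mono cont \<open>0 \<le> p\<close>, of ?S q U] T(1) U(1,2) by blast
    have W_lmeasurable: "W \<in> lmeasurable"
      using W(1,2) by (intro fmeasurableI2[OF U(3)]) (auto simp: sets_completionI_sets)
    have "q * measure lebesgue W \<le> p * (measure lebesgue T + e)"
      using W(4) W_lmeasurable U(3,4) \<open>0 \<le> p\<close> \<open>0 < e\<close>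
      by (simp add: emeasure_eq_measure2 ennreal_mult''[symmetric] ennreal_mult'[symmetric]
          ennreal_le_iff mult_left_mono order_trans)
    moreover have "measure lebesgue (W \<union> (?S - W)) = measure lebesgue W"
      using W_lmeasurable W(3) by (intro measure_Un_null_set) (auto simp: negligible_iff_null_sets)
    moreover have "W \<union> (?S - W) \<in> lmeasurable"
      using W_lmeasurable negligible_imp_measurable[OF W(3)] by (rule fmeasurable.Un)
    ultimately show "\<exists>T'. ?S \<subseteq> T' \<and> T' \<in> lmeasurable \<and>
        q * measure lebesgue T' \<le> p * (measure lebesgue T + e)"
      by (intro exI[of _ "W \<union> (?S - W)"]) auto
  qed blast
qed

theorem negligible_not_differentiable_mono_lipschitz:
  fixes h :: "real \<Rightarrow> real"
  assumes mono: "mono h" and lip: "L-lipschitz_on UNIV h"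
  shows "negligible {x. \<not> h differentiable (at x)}"
proof -
  have cont: "continuous_on UNIV h"
    using lip by (rule lipschitz_on_continuous_on)
  let ?Q = "{(p, q). p \<in> \<rat> \<and> q \<in> \<rat> \<and> 0 \<le> p \<and> p < q}"
  have "{x. \<not> h differentiable (at x)} \<subseteq> (\<Union>(p, q)\<in>?Q. {x. slope_gap h p q x})"
  proof
    fix x assume "x \<in> {x. \<not> h differentiable (at x)}"
    then have "\<not> (\<exists>D. (cball_slope h \<longlongrightarrow> D) (shrinking_cballs x))"
      using has_real_derivative_if_cball_slope_tendsto real_differentiable_def by auto
    then obtain p q where "p \<in> \<rat>" "q \<in> \<rat>" "0 \<le> p" "p < q" "slope_gap h p q x"
      using cball_slope_convergent_if_no_gap[OF mono lip, of x] by blast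
    then show "x \<in> (\<Union>(p, q)\<in>?Q. {x. slope_gap h p q x})"
      by (intro UN_I[of "(p, q)"]) auto
  qed
  moreover have "negligible (\<Union>(p, q)\<in>?Q. {x. slope_gap h p q x})"
  proof (rule negligible_countable_Union)
    have "?Q \<subseteq> \<rat> \<times> \<rat>"
      by auto
    then show "countable ((\<lambda>(p, q). {x. slope_gap h p q x}) ` ?Q)"
      by (intro countable_image countable_subset[OF _ countable_SIGMA]) (auto simp: countable_rat)
  next
    fix X assume "X \<in> (\<lambda>(p, q). {x. slope_gap h p q x}) ` ?Q"
    then obtain p q where "X = {x. slope_gap h p q x}" "0 \<le> p" "p < q"
      by auto
    then show "negligible X"
      using negligible_slope_gap[OF mono cont] by simp
  qed
  ultimately show ?thesis
    using negligible_subset by blast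
qed

section \<open>The set where the derivative is small\<close>

lemma derivative_le_iff_difference_quotients:
  assumes "(h has_real_derivative D) (at x)"
  shows "D \<le> q \<longleftrightarrow> (\<forall>k::nat. \<exists>m. \<forall>n\<ge>m.
    (h (x + inverse (real (Suc n))) - h x) / inverse (real (Suc n)) \<le> q + inverse (real (Suc k)))"
    (is "_ \<longleftrightarrow> (\<forall>k. \<exists>m. \<forall>n\<ge>m. ?Q n \<le> _)")
proof -
  have "(\<lambda>k. (h (x + k) - h x) / k) \<midarrow>0\<rightarrow> D"
    using assms by (simp add: DERIV_def)
  then have lim: "?Q \<longlonglongrightarrow> D"
    using LIMSEQ_inverse_real_of_nat unfolding LIMSEQ_SEQ_conv[symmetric] by auto
  show ?thesis
  proof
    assume "D \<le> q"
    have "D < q + inverse (real (Suc k))" for k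
    proof -
      have "0 < inverse (real (Suc k))"
        by simp
      then show ?thesis
        using \<open>D \<le> q\<close> by linarith
    qed
    then have "\<forall>\<^sub>F n in sequentially. ?Q n \<le> q + inverse (real (Suc k))" for k
      by (rule eventually_mono[OF order_tendstoD(2)[OF lim], of "q + inverse (real (Suc k))"]) auto
    then show "\<forall>k. \<exists>m. \<forall>n\<ge>m. ?Q n \<le> q + inverse (real (Suc k))"
      unfolding eventually_sequentially by blast
  next
    assume "\<forall>k. \<exists>m. \<forall>n\<ge>m. ?Q n \<le> q + inverse (real (Suc k))"
    then have "D \<le> q + inverse (real (Suc k))" for k
      by (intro tendsto_upperbound[OF lim]) (auto simp: eventually_sequentially)
    moreover have "(\<lambda>k. q + inverse (real (Suc k))) \<longlonglongrightarrow> q"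
      using tendsto_add[OF tendsto_const LIMSEQ_inverse_real_of_nat, of q] by simp
    ultimately show "D \<le> q"
      by (intro tendsto_lowerbound) (auto intro: always_eventually)
  qed
qed

text \<open>Away from the points of non-differentiability, the set is the Borel set described by
  the difference quotients.\<close>
lemma sets_lebesgue_derivative_le:
  fixes h :: "real \<Rightarrow> real"
  assumes cont: "continuous_on UNIV h" and null: "negligible {x. \<not> h differentiable (at x)}"
  shows "{x. \<exists>D. (h has_real_derivative D) (at x) \<and> D \<le> q} \<in> sets lebesgue"
    (is "?E \<in> _")
proof (rule sets_negligible_symdiff)
  define G where "G = {x. \<forall>k::nat. \<exists>m. \<forall>n\<ge>m.
    (h (x + inverse (real (Suc n))) - h x) / inverse (real (Suc n)) \<le> q + inverse (real (Suc k))}"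
  have [measurable]: "h \<in> borel_measurable borel"
    using cont by (rule borel_measurable_continuous_onI)
  have "G \<in> sets borel"
    unfolding G_def by measurable
  then show "G \<in> sets lebesgue"
    by (simp add: sets_completionI_sets)
  have "G - ?E \<union> (?E - G) \<subseteq> {x. \<not> h differentiable (at x)}"
  proof
    fix x assume x: "x \<in> G - ?E \<union> (?E - G)"
    show "x \<in> {x. \<not> h differentiable (at x)}"
    proof (rule ccontr)
      assume "x \<notin> {x. \<not> h differentiable (at x)}"
      then obtain D where D: "(h has_real_derivative D) (at x)"
        by (auto simp: real_differentiable_def)
      then have "x \<in> ?E \<longleftrightarrow> D \<le> q"
        using DERIV_unique by blast
      with derivative_le_iff_difference_quotients[OF D] x show False
        unfolding G_def by blast
    qed
  qed
  then show "negligible (G - ?E \<union> (?E - G))"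
    using null by (rule negligible_subset[rotated])
qed

lemma cover_derivative_gt:
  fixes h :: "real \<Rightarrow> real"
  assumes mono: "mono h" and cont: "continuous_on UNIV h" and "a \<le> b"
  obtains W where "W \<in> lmeasurable" "q * measure lebesgue W \<le> h b - h a"
    "negligible ({x \<in> {a<..<b}. \<exists>D. (h has_real_derivative D) (at x) \<and> q < D} - W)"
proof -
  let ?B = "{x \<in> {a<..<b}. \<exists>D. (h has_real_derivative D) (at x) \<and> q < D}"
  have freq: "\<exists>\<^sub>F i in shrinking_cballs x. q \<le> cball_slope h i" if x: "x \<in> ?B" for x
  proof -
    obtain D where "(h has_real_derivative D) (at x)" "q < D"
      using x by blast
    then have "\<exists>\<^sub>F i in shrinking_cballs x. q < cball_slope h i"
      by (rule frequently_cball_slope_gt_if_derivative_gt)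
    then show ?thesis
      by (rule frequently_elim1) simp
  qed
  have "?B \<subseteq> {a<..<b}"
    by blast
  then obtain W where W: "W \<in> sets borel" "W \<subseteq> {a<..<b}" "negligible (?B - W)"
    "ennreal q * emeasure lebesgue W \<le> emeasure (interval_measure h) W"
    by (rule cover_by_cballs_slope_ge[OF mono cont open_greaterThanLessThan _ freq])
  have W_lmeasurable: "W \<in> lmeasurable"
    using W(1,2)
    by (intro fmeasurableI2[OF lmeasurable_interval(2)]) (auto simp: sets_completionI_sets)
  have "ennreal (q * measure lebesgue W) \<le> emeasure (interval_measure h) W"
    using W(4) W_lmeasurable by (simp add: emeasure_eq_measure2 ennreal_mult'')
  also have "\<dots> \<le> emeasure (interval_measure h) {a..b}"
    using W(2) by (intro emeasure_mono) auto
  also have "\<dots> = ennreal (h b - h a)"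
    using assms by (intro emeasure_interval_measure_Icc) (auto simp: mono_def)
  finally have "q * measure lebesgue W \<le> h b - h a"
    using mono \<open>a \<le> b\<close> by (subst (asm) ennreal_le_iff) (auto simp: mono_def)
  with W(3) W_lmeasurable show ?thesis
    using that by blast
qed

theorem measure_derivative_le_lower_bound:
  fixes h :: "real \<Rightarrow> real"
  assumes mono: "mono h" and lip: "L-lipschitz_on UNIV h" and "a \<le> b" "0 < q"
  defines "E \<equiv> {x \<in> {a<..<b}. \<exists>D. (h has_real_derivative D) (at x) \<and> D \<le> q}"
  shows "E \<in> lmeasurable" and "q * (b - a - measure lebesgue E) \<le> h b - h a"
proof -
  have cont: "continuous_on UNIV h"
    using lip by (rule lipschitz_on_continuous_on)
  have null: "negligible {x. \<not> h differentiable (at x)}"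
    using mono lip by (rule negligible_not_differentiable_mono_lipschitz)
  have "E = {a<..<b} \<inter> {x. \<exists>D. (h has_real_derivative D) (at x) \<and> D \<le> q}"
    by (auto simp: E_def)
  then show E: "E \<in> lmeasurable"
    using sets_lebesgue_derivative_le[OF cont null, of q]
    by (intro fmeasurableI2[OF lmeasurable_interval(2)]) auto
  obtain W where W: "W \<in> lmeasurable" "q * measure lebesgue W \<le> h b - h a"
    "negligible ({x \<in> {a<..<b}. \<exists>D. (h has_real_derivative D) (at x) \<and> q < D} - W)"
    using cover_derivative_gt[OF mono cont \<open>a \<le> b\<close>, of q] by blast
  define Z where "Z = {x. \<not> h differentiable (at x)} \<union>
    ({x \<in> {a<..<b}. \<exists>D. (h has_real_derivative D) (at x) \<and> q < D} - W)"
  have Z: "negligible Z"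
    unfolding Z_def using null W(3) by (rule negligible_Un)
  have "x \<in> E \<or> x \<in> {x \<in> {a<..<b}. \<exists>D. (h has_real_derivative D) (at x) \<and> q < D}"
    if "x \<in> {a<..<b}" "(h has_real_derivative D) (at x)" for x D
  proof (cases "D \<le> q")
    case True
    then show ?thesis
      using that by (auto simp: E_def)
  next
    case False
    then show ?thesis
      using that by (intro disjI2) (auto simp: not_le)
  qed
  then have "{a<..<b} \<subseteq> (E \<union> W) \<union> Z"
    unfolding Z_def real_differentiable_def by blast
  moreover have "(E \<union> W) \<union> Z \<in> lmeasurable"
    using E W(1) negligible_imp_measurable[OF Z] by (intro fmeasurable.Un)
  ultimately have "measure lebesgue {a<..<b} \<le> measure lebesgue ((E \<union> W) \<union> Z)"
    by (intro measure_mono_fmeasurable) auto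
  then have "b - a \<le> measure lebesgue ((E \<union> W) \<union> Z)"
    using \<open>a \<le> b\<close> by (simp add: measure_completion)
  also have "\<dots> = measure lebesgue (E \<union> W)"
    using E W(1) Z by (intro measure_Un_null_set) (auto simp: negligible_iff_null_sets)
  also have "\<dots> \<le> measure lebesgue E + measure lebesgue W"
    using E W(1) by (intro measure_Un_le) auto
  finally have "q * (b - a - measure lebesgue E) \<le> q * measure lebesgue W"
    using \<open>0 < q\<close> by (intro mult_left_mono) auto
  with W(2) show "q * (b - a - measure lebesgue E) \<le> h b - h a"
    by linarith
qed

section \<open>Lipschitz functions on the unit interval\<close>

lemma Lip1_abs_le_sup_dist01:
  assumes "f \<in> Lip1" "g \<in> Lip1" "x \<in> {0..1}"
  shows "\<bar>g x - f x\<bar> \<le> sup_dist01 g f"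
proof -
  have "\<bar>g y - f y\<bar> \<le> \<bar>g 0 - f 0\<bar> + 2" if "y \<in> {0..1}" for y
  proof -
    have "\<bar>g y - g 0\<bar> \<le> 1" "\<bar>f y - f 0\<bar> \<le> 1"
      using assms(1,2) that lipschitz_onD[of 1 "{0..1}" _ y 0]
      by (fastforce simp: Lip1_def dist_real_def)+
    then show ?thesis
      by linarith
  qed
  then have "bdd_above ((\<lambda>y. \<bar>g y - f y\<bar>) ` {0..1})"
    by (intro bdd_aboveI2) blast
  then show ?thesis
    unfolding sup_dist01_def using assms(3) by (rule cSUP_upper2) simp
qed

definition clamp01 :: "real \<Rightarrow> real" where
  "clamp01 x = max 0 (min 1 x)"

definition slack :: "(real \<Rightarrow> real) \<Rightarrow> real \<Rightarrow> real" where
  "slack g x = clamp01 x - g (clamp01 x)"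

lemma slack_eq: "x \<in> {0..1} \<Longrightarrow> slack g x = x - g x"
  by (simp add: slack_def clamp01_def)

lemma mono_slack:
  assumes "g \<in> Lip1"
  shows "mono (slack g)"
proof
  fix x y :: real assume "x \<le> y"
  then have "g (clamp01 y) - g (clamp01 x) \<le> clamp01 y - clamp01 x"
    using assms lipschitz_onD[of 1 "{0..1}" g "clamp01 y" "clamp01 x"]
    by (auto simp: Lip1_def clamp01_def dist_real_def abs_le_iff)
  then show "slack g x \<le> slack g y"
    by (simp add: slack_def)
qed

lemma lipschitz_slack:
  assumes "g \<in> Lip1"
  shows "2-lipschitz_on UNIV (slack g)"
proof -
  have clamp: "1-lipschitz_on UNIV clamp01"
    by (rule lipschitz_onI) (auto simp: clamp01_def dist_real_def)
  have "1-lipschitz_on (clamp01 ` UNIV) g"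
    using assms unfolding Lip1_def by (auto intro: lipschitz_on_subset simp: clamp01_def)
  then have "(1 * 1)-lipschitz_on UNIV (\<lambda>x. g (clamp01 x))"
    using clamp by (intro lipschitz_on_compose2)
  then show ?thesis
    using lipschitz_on_diff[OF clamp] unfolding slack_def by fastforce
qed

lemma slack_derivative_iff:
  assumes "r \<in> {0<..<1}"
  shows "(g has_real_derivative D) (at r within {0..1}) \<longleftrightarrow>
    (slack g has_real_derivative 1 - D) (at r)"
proof -
  have "at r within {0..1} = at r"
    using assms by (intro at_within_interior) simp
  moreover have "(g has_real_derivative D) (at r) \<longleftrightarrow>
      ((\<lambda>x. x - g x) has_real_derivative 1 - D) (at r)"
    using DERIV_diff[OF DERIV_ident, of "\<lambda>x. x - g x" "1 - D" r]
      DERIV_diff[OF DERIV_ident, of g D r] by auto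
  moreover have "((\<lambda>x. x - g x) has_real_derivative 1 - D) (at r) \<longleftrightarrow>
      (slack g has_real_derivative 1 - D) (at r)"
    using assms by (intro has_field_derivative_cong_eventually)
      (auto simp: eventually_at_topological slack_eq intro!: exI[of _ "{0<..<1}"])
  ultimately show ?thesis
    by simp
qed

lemma measure_Lip1_derivative_ge:
  assumes "g \<in> Lip1" "0 \<le> a" "a \<le> b" "b \<le> 1" "\<tau> < 1"
  defines "C \<equiv> {r \<in> {a..b}. \<exists>D. (g has_real_derivative D) (at r within {0..1}) \<and> D \<ge> \<tau>}"
  shows "C \<in> lmeasurable" and "(1 - \<tau>) * (b - a - measure lebesgue C) \<le> (b - a) - (g b - g a)"
proof -
  define E where "E = {x \<in> {a<..<b}. \<exists>D. (slack g has_real_derivative D) (at x) \<and> D \<le> 1 - \<tau>}"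
  have E: "E \<in> lmeasurable" "(1 - \<tau>) * (b - a - measure lebesgue E) \<le> slack g b - slack g a"
    unfolding E_def using mono_slack[OF assms(1)] lipschitz_slack[OF assms(1)] assms(3,5)
    by (intro measure_derivative_le_lower_bound; simp)+
  have interior: "x \<in> {0<..<1}" if "x \<in> {a<..<b}" for x
    using that assms(2,4) by auto
  have "E \<subseteq> C"
  proof
    fix x assume "x \<in> E"
    then obtain D where "x \<in> {a<..<b}" "(slack g has_real_derivative D) (at x)" "D \<le> 1 - \<tau>"
      unfolding E_def by blast
    then show "x \<in> C"
      using slack_derivative_iff[OF interior, of x g "1 - D"] unfolding C_def by force
  qed
  have "C - E \<subseteq> {a, b}"
  proof
    fix x assume "x \<in> C - E"
    then obtain D where "x \<in> {a..b}" "(g has_real_derivative D) (at x within {0..1})" "\<tau> \<le> D"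
      "x \<notin> E"
      unfolding C_def by blast
    then show "x \<in> {a, b}"
      using slack_derivative_iff[OF interior, of x g D] unfolding E_def by force
  qed
  then have "negligible (C - E)"
    by (rule negligible_subset[OF negligible_finite, rotated]) simp
  moreover have "C = E \<union> (C - E)"
    using \<open>E \<subseteq> C\<close> by blast
  ultimately show C: "C \<in> lmeasurable"
    using E(1) by (metis fmeasurable.Un negligible_imp_measurable)
  have "measure lebesgue E \<le> measure lebesgue C"
    using C E(1) \<open>E \<subseteq> C\<close> by (intro measure_mono_fmeasurable) auto
  then have "(1 - \<tau>) * (b - a - measure lebesgue C) \<le> (1 - \<tau>) * (b - a - measure lebesgue E)"
    using assms(5) by (intro mult_left_mono) auto
  moreover have "slack g b - slack g a = (b - a) - (g b - g a)"
    using assms(2-4) by (simp add: slack_eq)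
  ultimately show "(1 - \<tau>) * (b - a - measure lebesgue C) \<le> (b - a) - (g b - g a)"
    using E(2) by linarith
qed

theorem lemma6p3:
  fixes f :: "real \<Rightarrow> real" and s t \<tau> \<epsilon> :: real
  assumes "f \<in> Lip1"
    and "0 \<le> s" and "s < t" and "t \<le> 1"
    and "0 < \<tau>" and "\<tau> < 1" and "0 < \<epsilon>" and "\<epsilon> < 1"
    and "f t - f s = t - s"
  shows "\<exists>\<delta>>0. \<forall>g\<in>Lip1. sup_dist01 g f \<le> \<delta> \<longrightarrow>
           (let C = {r\<in>{s..t}. \<exists>D. (g has_real_derivative D) (at r within {0..1}) \<and> D \<ge> \<tau>}
            in C \<in> sets lebesgue \<and> emeasure lebesgue C \<ge> ennreal ((1 - \<epsilon>) * (t - s)))"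
proof (unfold Let_def, intro exI[of _ "\<epsilon> * (1 - \<tau>) * (t - s) / 2"] conjI ballI impI)
  show "0 < \<epsilon> * (1 - \<tau>) * (t - s) / 2"
    using assms by simp
  fix g assume g: "g \<in> Lip1" "sup_dist01 g f \<le> \<epsilon> * (1 - \<tau>) * (t - s) / 2"
  define C where "C = {r\<in>{s..t}. \<exists>D. (g has_real_derivative D) (at r within {0..1}) \<and> D \<ge> \<tau>}"
  have C: "C \<in> lmeasurable" "(1 - \<tau>) * (t - s - measure lebesgue C) \<le> (t - s) - (g t - g s)"
    unfolding C_def using measure_Lip1_derivative_ge[OF g(1)] assms(2-4,6) by auto
  have "\<bar>g s - f s\<bar> \<le> sup_dist01 g f" "\<bar>g t - f t\<bar> \<le> sup_dist01 g f"
    using Lip1_abs_le_sup_dist01[OF assms(1) g(1)] assms(2-4) by auto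
  with C(2) g(2) assms(9)
  have "(1 - \<tau>) * (t - s - measure lebesgue C) \<le> (1 - \<tau>) * (\<epsilon> * (t - s))"
    by (simp add: algebra_simps)
  then have "t - s - measure lebesgue C \<le> \<epsilon> * (t - s)"
    using assms(6) by (simp add: mult_le_cancel_left_pos)
  then have "(1 - \<epsilon>) * (t - s) \<le> measure lebesgue C"
    by (simp add: algebra_simps)
  with C(1) show "emeasure lebesgue C \<ge> ennreal ((1 - \<epsilon>) * (t - s))"
    by (simp add: emeasure_eq_measure2 ennreal_leI)
  show "C \<in> sets lebesgue"
    using C(1) by (rule fmeasurableD)
qed

end
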